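(* Let $\{\rho_\theta\}$ be a two-parameter qubit model satisfying the regularity conditions, with Bloch vectors $\mathbf s_\theta$, and let $W=[w_{ij}]$ be a $2\times 2$ real positive definite matrix. Then \[ C_\theta^H[W]=\min_{\vec\xi\in\mathbb R^2}h_\theta[\vec\xi|W], \] where, for $\vec\xi=(\xi^1,\xi^2)^T$, \[ h_\theta[\vec\xi|W]=\mathrm{Tr}(WG_\theta^{-1})+\langle\boldsymbol\ell_\theta^\perp,Q_\theta^{-1}\boldsymbol\ell_\theta^\perp\rangle(\vec\xi|W\vec\xi)+2\sqrt{\det W}\,\Big|\langle\boldsymbol\ell_\theta^1,F_\theta\boldsymbol\ell_\theta^2\rangle+(1-s_\theta^2)(\vec\gamma_\theta|\vec\xi)\Big|. \]
   Context: Two-parameter qubit model: density matrices $\rho_\theta=\tfrac12(I+\mathbf s_\theta\cdot\boldsymbol\sigma)$ on $\mathbb C^2$, $\theta=(\theta^1,\theta^2)\in\Theta\subset\mathbb R^2$ open, $\boldsymbol\sigma$ the Pauli matrices, with Bloch vector $\mathbf s_\theta\in\mathbb R^3$, $s_\theta=|\mathbf s_\theta|<1$ (regularity: full rank, smooth dependence on $\theta$, $\partial_1\rho_\theta,\partial_2\rho_\theta$ linearly independent, $\partial_i=\partial/\partial\theta^i$). $\langle\mathbf a,\mathbf b\rangle=\sum_i\bar a_ib_i$ on $\mathbb C^3$, $(\vec a|\vec b)=a_1b_1+a_2b_2$ on $\mathbb R^2$. $Q_\theta=\mathbb 1+\frac{|\mathbf s_\theta\rangle\langle\mathbf s_\theta|}{1-s_\theta^2}$,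 so $Q_\theta^{-1}=\mathbb 1-|\mathbf s_\theta\rangle\langle\mathbf s_\theta|$; $F_\theta\mathbf a=\mathbf s_\theta\times\mathbf a$. SLD Bloch vectors $\boldsymbol\ell_{\theta,i}=Q_\theta\partial_i\mathbf s_\theta$; SLD Fisher matrix $G_\theta=[g_{\theta,ij}]$, $g_{\theta,ij}=\langle\partial_i\mathbf s_\theta,Q_\theta\partial_j\mathbf s_\theta\rangle$ (equal to the usual SLD Fisher information $\mathrm{tr}(\rho_\theta\tfrac12\{L_{\theta,i},L_{\theta,j}\})$); SLD dual Bloch vectors $\boldsymbol\ell_\theta^i=\sum_j(G_\theta^{-1})^{ji}\boldsymbol\ell_{\theta,j}$; $\boldsymbol\ell_\theta^\perp=\partial_1\mathbf s_\theta\times\partial_2\mathbf s_\theta$; $\gamma_{\theta,i}=\langle\mathbf s_\theta,\boldsymbol\ell_{\theta,i}\rangle$, $\vec\gamma_\theta=(\gamma_{\theta,1},\gamma_{\theta,2})^T$. Holevo bound: $C_\theta^H[W]=\min_{\vec X}\{\mathrm{Tr}(W\,\mathrm{Re}\,Z_\theta[\vec X])+\mathrm{TrAbs}(W\,\mathrm{Im}\,Z_\theta[\vec X])\}$ over pairs $\vec X=(X^1,X^2)$ of hermitian operators with $\mathrm{tr}(\rho_\theta X^i)=0$, $\mathrm{tr}(\partial_i\rho_\theta X^j)=\delta^j_i$, where $Z_\theta[\vec X]=[\mathrm{tr}(\rho_\theta X^jX^i)]_{i,j}$ and $\mathrm{TrAbs}$ of a diagonalizable matrix is the sum of absolute values of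 its eigenvalues. *)

theory Defs
  imports "HOL-Analysis.Analysis"
begin

definition pauli :: "3 \<Rightarrow> complex^2^2" where
  "pauli k =
     (if k = 1 then (\<chi> i j. if i \<noteq> j then 1 else 0)
      else if k = 2 then (\<chi> i j. if i = 1 \<and> j = 2 then - \<i> else if i = 2 \<and> j = 1 then \<i> else 0)
      else (\<chi> i j. if i = j then (if i = 1 then 1 else -1) else 0))"

definition bloch_rho :: "real^3 \<Rightarrow> complex^2^2" where
  "bloch_rho s = (1/2::real) *\<^sub>R (mat 1 + (\<Sum>k\<in>UNIV. (s $ k) *\<^sub>R pauli k))"

definition hermitian2 :: "complex^2^2 \<Rightarrow> bool" where
  "hermitian2 X \<longleftrightarrow> (\<forall>i j. X $ i $ j = cnj (X $ j $ i))"

definition pderiv2 :: "(real^2 \<Rightarrow> 'b::real_normed_vector) \<Rightarrow> real^2 \<Rightarrow> 2 \<Rightarrow> 'b" where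
  "pderiv2 f \<theta> i = frechet_derivative f (at \<theta>) (axis i 1)"

text \<open>Sum of absolute values of the (complex) eigenvalues, counted with multiplicity,
  of a real 2x2 matrix: the eigenvalues are the roots of x^2 - tr A x + det A.\<close>
definition TrAbs2 :: "real^2^2 \<Rightarrow> real" where
  "TrAbs2 A = (let t = complex_of_real (trace A);
                   D = complex_of_real (trace A ^ 2 - 4 * det A)
               in cmod ((t + csqrt D) / 2) + cmod ((t - csqrt D) / 2))"

definition Zmat :: "complex^2^2 \<Rightarrow> (2 \<Rightarrow> complex^2^2) \<Rightarrow> complex^2^2" where
  "Zmat \<rho> X = (\<chi> i j. trace (\<rho> ** X j ** X i))"

definition holevo_feasible :: "complex^2^2 \<Rightarrow> (2 \<Rightarrow> complex^2^2) \<Rightarrow> (2 \<Rightarrow> complex^2^2) \<Rightarrow> bool" where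
  "holevo_feasible \<rho> d\<rho> X \<longleftrightarrow>
     (\<forall>i. hermitian2 (X i)) \<and> (\<forall>i. trace (\<rho> ** X i) = 0) \<and>
     (\<forall>i j. trace (d\<rho> i ** X j) = (if i = j then 1 else 0))"

definition holevo_obj :: "real^2^2 \<Rightarrow> complex^2^2 \<Rightarrow> (2 \<Rightarrow> complex^2^2) \<Rightarrow> real" where
  "holevo_obj W \<rho> X =
     trace (W ** (\<chi> i j. Re (Zmat \<rho> X $ i $ j))) + TrAbs2 (W ** (\<chi> i j. Im (Zmat \<rho> X $ i $ j)))"

text \<open>C^H[W] (the minimum, written as an infimum; attainment is part of the theorem).\<close>
definition holevo_bound :: "real^2^2 \<Rightarrow> complex^2^2 \<Rightarrow> (2 \<Rightarrow> complex^2^2) \<Rightarrow> real" where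
  "holevo_bound W \<rho> d\<rho> = Inf {holevo_obj W \<rho> X | X. holevo_feasible \<rho> d\<rho> X}"

definition Qop :: "real^3 \<Rightarrow> real^3 \<Rightarrow> real^3" where
  "Qop s a = a + ((s \<bullet> a) / (1 - (norm s)^2)) *\<^sub>R s"

definition Qinv :: "real^3 \<Rightarrow> real^3 \<Rightarrow> real^3" where
  "Qinv s a = a - (s \<bullet> a) *\<^sub>R s"

definition Fop :: "real^3 \<Rightarrow> real^3 \<Rightarrow> real^3" where
  "Fop s a = cross3 s a"

text \<open>SLD Bloch vectors, Fisher matrix, dual vectors, etc., in terms of s = s_theta and
  ds i = partial_i s_theta.\<close>
definition sld :: "real^3 \<Rightarrow> (2 \<Rightarrow> real^3) \<Rightarrow> 2 \<Rightarrow> real^3" where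
  "sld s ds i = Qop s (ds i)"

definition fisherG :: "real^3 \<Rightarrow> (2 \<Rightarrow> real^3) \<Rightarrow> real^2^2" where
  "fisherG s ds = (\<chi> i j. ds i \<bullet> Qop s (ds j))"

definition sld_dual :: "real^3 \<Rightarrow> (2 \<Rightarrow> real^3) \<Rightarrow> 2 \<Rightarrow> real^3" where
  "sld_dual s ds i = (\<Sum>j\<in>UNIV. (matrix_inv (fisherG s ds) $ j $ i) *\<^sub>R sld s ds j)"

definition lperp :: "(2 \<Rightarrow> real^3) \<Rightarrow> real^3" where
  "lperp ds = cross3 (ds 1) (ds 2)"

definition gammav :: "real^3 \<Rightarrow> (2 \<Rightarrow> real^3) \<Rightarrow> real^2" where
  "gammav s ds = (\<chi> i. s \<bullet> sld s ds i)"

definition hfun :: "real^3 \<Rightarrow> (2 \<Rightarrow> real^3) \<Rightarrow> real^2^2 \<Rightarrow> real^2 \<Rightarrow> real" where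
  "hfun s ds W \<xi> =
     trace (W ** matrix_inv (fisherG s ds))
     + (lperp ds \<bullet> Qinv s (lperp ds)) * (\<xi> \<bullet> (W *v \<xi>))
     + 2 * sqrt (det W) *
       \<bar>sld_dual s ds 1 \<bullet> Fop s (sld_dual s ds 2) + (1 - (norm s)^2) * (gammav s ds \<bullet> \<xi>)\<bar>"

end

theory Submission
  imports Defs
begin

(* A feasible X is a pair of hermitian zero-mean observables, X^i = v_i . sigma - <s, v_i> I,
   and the unbiasedness constraints read <d_i s, v_j> = delta_ij; these force
   v_j = l^j + xi^j l_perp for a unique xi in R^2.  For such X, Re Z = [<v_j, Q^-1 v_i>] and
   Im Z = [<s, v_j x v_i>].  Since l_perp is Q^-1-orthogonal to the l^i, the first term of the
   objective is Tr(W G^-1) + <l_perp, Q^-1 l_perp> (xi|W xi); since Im Z is antisymmetric and W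
   symmetric, W Im Z is traceless with determinant det W <s, v_1 x v_2>^2, so its TrAbs is
   2 sqrt(det W) |<s, v_1 x v_2>|.  Hence the Holevo objective on the feasible set is exactly
   h[xi|W], which is continuous and grows quadratically in xi, so it attains its minimum. *)

definition bloch_matrix :: "real \<Rightarrow> real^3 \<Rightarrow> complex^2^2" where
  "bloch_matrix a v = a *\<^sub>R mat 1 + (\<Sum>k\<in>UNIV. (v $ k) *\<^sub>R pauli k)"

definition centred_bloch_matrix :: "real^3 \<Rightarrow> real^3 \<Rightarrow> complex^2^2" where
  "centred_bloch_matrix s v = bloch_matrix (- (s \<bullet> v)) v"

lemma bloch_matrix_entries:
  "bloch_matrix a v $ 1 $ 1 = complex_of_real (a + v$3)"
  "bloch_matrix a v $ 1 $ 2 = Complex (v$1) (- v$2)"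
  "bloch_matrix a v $ 2 $ 1 = Complex (v$1) (v$2)"
  "bloch_matrix a v $ 2 $ 2 = complex_of_real (a - v$3)"
  by (simp_all add: bloch_matrix_def pauli_def sum_3 mat_def complex_eq_iff)

lemma bloch_rho_eq_bloch_matrix: "bloch_rho s = (1/2::real) *\<^sub>R bloch_matrix 1 s"
  by (simp add: bloch_rho_def bloch_matrix_def)

lemma bloch_rho_eq_const_plus_linear:
  "bloch_rho s = (1/2::real) *\<^sub>R mat 1 + (1/2::real) *\<^sub>R bloch_matrix 0 s"
  by (simp add: bloch_rho_def bloch_matrix_def scaleR_add_right)

lemma linear_bloch_matrix_0: "linear (bloch_matrix 0)"
  by (rule linearI) (simp_all add: bloch_matrix_def sum.distrib scaleR_add_left scaleR_sum_right)

lemma independent_if_half_bloch_matrix_0_independent: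
  assumes "\<forall>a b::real. a *\<^sub>R ((1/2::real) *\<^sub>R bloch_matrix 0 x)
             + b *\<^sub>R ((1/2::real) *\<^sub>R bloch_matrix 0 y) = 0 \<longrightarrow> a = 0 \<and> b = 0"
  shows "\<forall>a b::real. a *\<^sub>R x + b *\<^sub>R y = 0 \<longrightarrow> a = 0 \<and> b = 0"
proof (intro allI impI)
  fix a b :: real
  assume "a *\<^sub>R x + b *\<^sub>R y = 0"
  have "a *\<^sub>R ((1/2::real) *\<^sub>R bloch_matrix 0 x) + b *\<^sub>R ((1/2::real) *\<^sub>R bloch_matrix 0 y)
      = (1/2::real) *\<^sub>R bloch_matrix 0 (a *\<^sub>R x + b *\<^sub>R y)"
    by (simp only: linear_add[OF linear_bloch_matrix_0] linear_cmul[OF linear_bloch_matrix_0]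
        scaleR_add_right scaleR_left_commute)
  also have "\<dots> = 0"
    using \<open>a *\<^sub>R x + b *\<^sub>R y = 0\<close> by (simp add: linear_0[OF linear_bloch_matrix_0])
  finally show "a = 0 \<and> b = 0"
    using assms by blast
qed

lemma pderiv2_bloch_rho:
  assumes "s differentiable (at \<theta>)"
  shows "pderiv2 (\<lambda>u. bloch_rho (s u)) \<theta> i = (1/2::real) *\<^sub>R bloch_matrix 0 (pderiv2 s \<theta> i)"
proof -
  let ?L = "\<lambda>y. (1/2::real) *\<^sub>R bloch_matrix 0 y"
  have "bounded_linear (bloch_matrix 0)"
    using linear_bloch_matrix_0 linear_conv_bounded_linear by blast
  then have "bounded_linear ?L"
    by (rule bounded_linear_compose[OF bounded_linear_scaleR_right])
  then have "((\<lambda>u. ?L (s u)) has_derivative (\<lambda>h. ?L (frechet_derivative s (at \<theta>) h))) (at \<theta>)"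
    using assms frechet_derivative_works bounded_linear.has_derivative by blast
  then have "((\<lambda>u. bloch_rho (s u)) has_derivative (\<lambda>h. ?L (frechet_derivative s (at \<theta>) h))) (at \<theta>)"
    unfolding bloch_rho_eq_const_plus_linear add.commute[of "(1/2::real) *\<^sub>R mat 1"]
    by (rule has_derivative_add_const)
  then show ?thesis
    unfolding pderiv2_def by (metis frechet_derivative_at)
qed

lemma trace_2x2: "trace (M::'a::semiring_1^2^2) = M$1$1 + M$2$2"
  by (simp add: trace_def sum_2)

lemma inner_2: "(x::real^2) \<bullet> y = x$1 * y$1 + x$2 * y$2"
  by (simp add: inner_vec_def sum_2)

lemma trace_bloch_rho_mult: "trace (bloch_rho s ** bloch_matrix a v) = complex_of_real (a + s \<bullet> v)"
  unfolding bloch_rho_eq_bloch_matrix trace_2x2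
  by (simp add: matrix_matrix_mult_def sum_2 bloch_matrix_entries complex_eq_iff inner_vec_def
      sum_3 algebra_simps)

lemma trace_bloch_rho_mult_mult:
  "trace (bloch_rho s ** bloch_matrix b v ** bloch_matrix c w) =
   Complex (b*c + b*(s \<bullet> w) + c*(s \<bullet> v) + v \<bullet> w) (s \<bullet> cross3 v w)"
  unfolding bloch_rho_eq_bloch_matrix trace_2x2
  by (simp add: matrix_matrix_mult_def sum_2 bloch_matrix_entries complex_eq_iff inner_vec_def
      sum_3 cross_components algebra_simps)

lemma trace_bloch_matrix_0_mult:
  "trace (((1/2::real) *\<^sub>R bloch_matrix 0 d) ** bloch_matrix a v) = complex_of_real (d \<bullet> v)"
  unfolding trace_2x2
  by (simp add: matrix_matrix_mult_def sum_2 bloch_matrix_entries complex_eq_iff inner_vec_def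
      sum_3 algebra_simps)

lemma hermitian2_bloch_matrix: "hermitian2 (bloch_matrix a v)"
  unfolding hermitian2_def forall_2 by (simp add: bloch_matrix_entries complex_eq_iff)

lemma hermitian2_obtains_bloch_matrix:
  assumes "hermitian2 X"
  obtains a v where "X = bloch_matrix a v"
proof
  from assms have h: "Im (X$1$1) = 0" "Im (X$2$2) = 0" "X$2$1 = cnj (X$1$2)"
    unfolding hermitian2_def by (metis cnj.sel(2) neg_equal_zero)+
  show "X = bloch_matrix (Re (X$1$1 + X$2$2) / 2)
                (vector [Re (X$1$2), - Im (X$1$2), Re (X$1$1 - X$2$2) / 2])"
    unfolding vec_eq_iff forall_2 using h
    by (simp add: bloch_matrix_entries complex_eq_iff field_simps)
qed

lemma zero_mean_hermitian2_obtains_centred: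
  assumes "hermitian2 X" and "trace (bloch_rho s ** X) = 0"
  obtains v where "X = centred_bloch_matrix s v"
proof -
  obtain a v where X: "X = bloch_matrix a v"
    using hermitian2_obtains_bloch_matrix[OF assms(1)] .
  have "a = - (s \<bullet> v)"
    using assms(2) unfolding X trace_bloch_rho_mult by (simp only: of_real_eq_0_iff)
  with X show thesis
    using that unfolding centred_bloch_matrix_def by blast
qed

lemma TrAbs2_traceless:
  assumes "trace B = 0" and "det B \<ge> 0"
  shows "TrAbs2 B = 2 * sqrt (det B)"
proof -
  have "cmod ((0 + r) / 2) + cmod ((0 - r) / 2) = cmod r" for r :: complex
    by (simp add: norm_divide)
  then have "TrAbs2 B = cmod (csqrt (complex_of_real (- 4 * det B)))"
    unfolding TrAbs2_def Let_def assms(1) by simp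
  also have "\<dots> = sqrt (4 * det B)"
    using assms(2) by (simp only: norm_csqrt norm_of_real) simp
  finally show ?thesis by (simp add: real_sqrt_mult)
qed

lemma holevo_obj_centred:
  assumes W: "transpose W = W" and "det W \<ge> 0"
  shows "holevo_obj W (bloch_rho s) (\<lambda>i. centred_bloch_matrix s (v i)) =
    (\<Sum>i\<in>UNIV. \<Sum>k\<in>UNIV. W$i$k * (v k \<bullet> Qinv s (v i)))
    + 2 * sqrt (det W) * \<bar>s \<bullet> cross3 (v 1) (v 2)\<bar>"
proof -
  let ?X = "\<lambda>i. centred_bloch_matrix s (v i)"
  let ?c = "s \<bullet> cross3 (v 1) (v 2)"
  let ?B = "W ** (\<chi> i j. Im (Zmat (bloch_rho s) ?X $ i $ j))"
  have Z: "Zmat (bloch_rho s) ?X $ i $ j =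
     Complex (v i \<bullet> Qinv s (v j)) (s \<bullet> cross3 (v j) (v i))" for i j
    by (simp add: Zmat_def centred_bloch_matrix_def trace_bloch_rho_mult_mult Qinv_def
        inner_diff_right algebra_simps inner_commute)
  have W12: "W$1$2 = W$2$1"
    using arg_cong[OF W, of "\<lambda>M. M$1$2"] by (simp add: transpose_def)
  have c21: "s \<bullet> cross3 (v 2) (v 1) = - ?c"
    by (subst cross_skew) simp
  have "trace ?B = 0"
    by (simp add: Z trace_2x2 matrix_matrix_mult_def sum_2 c21 W12)
  moreover have "det ?B = ?c^2 * det W"
    by (simp add: Z det_2 matrix_matrix_mult_def sum_2 c21 W12 power2_eq_square algebra_simps)
  ultimately have "TrAbs2 ?B = 2 * sqrt (det W) * \<bar>?c\<bar>"
    using assms(2) by (simp add: TrAbs2_traceless real_sqrt_mult)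
  moreover have "trace (W ** (\<chi> i j. Re (Zmat (bloch_rho s) ?X $ i $ j)))
       = (\<Sum>i\<in>UNIV. \<Sum>k\<in>UNIV. W$i$k * (v k \<bullet> Qinv s (v i)))"
    by (simp add: trace_def matrix_matrix_mult_def Z)
  ultimately show ?thesis
    unfolding holevo_obj_def by simp
qed

lemma inner_Qop: "x \<bullet> Qop s y = x \<bullet> y + (s \<bullet> x) * (s \<bullet> y) / (1 - (norm s)^2)"
  by (simp add: Qop_def inner_add_right inner_commute)

lemma inner_Qinv_commute: "x \<bullet> Qinv s y = Qinv s x \<bullet> y"
  by (simp add: Qinv_def inner_diff_left inner_diff_right inner_commute)

lemma Qinv_add: "Qinv s (x + y) = Qinv s x + Qinv s y"
  by (simp add: Qinv_def inner_add_right algebra_simps)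

lemma Qinv_scaleR: "Qinv s (c *\<^sub>R x) = c *\<^sub>R Qinv s x"
  by (simp add: Qinv_def algebra_simps)

lemma one_minus_norm_square_pos: "norm (s::'a::real_normed_vector) < 1 \<Longrightarrow> 1 - (norm s)^2 > 0"
  by (simp add: abs_square_less_1)

lemma Qinv_Qop:
  assumes "norm s < 1"
  shows "Qinv s (Qop s x) = x"
proof -
  have r: "1 - (norm s)^2 > 0"
    using assms by (rule one_minus_norm_square_pos)
  have "s \<bullet> Qop s x = (s \<bullet> x) / (1 - (norm s)^2)"
    using r by (simp add: inner_Qop power2_norm_eq_inner field_simps)
  then show ?thesis
    using r by (simp add: Qinv_def Qop_def scaleR_add_left[symmetric] field_simps)
qed

lemma inner_Qop_scaled:
  assumes "norm s < 1"
  shows "(1 - (norm s)^2) * (s \<bullet> Qop s x) = s \<bullet> x"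
  using one_minus_norm_square_pos[OF assms]
  by (simp add: inner_Qop power2_norm_eq_inner field_simps)

lemma inner_Qop_ge:
  assumes "norm s < 1"
  shows "x \<bullet> Qop s x \<ge> x \<bullet> x"
  using one_minus_norm_square_pos[OF assms] by (simp add: inner_Qop)

lemma inner_Qinv_pos:
  assumes "norm s < 1" and "x \<noteq> 0"
  shows "x \<bullet> Qinv s x > 0"
proof -
  have "(s \<bullet> x)^2 \<le> (s \<bullet> s) * (x \<bullet> x)"
    by (rule Cauchy_Schwarz_ineq)
  also have "\<dots> < x \<bullet> x"
  proof -
    have "s \<bullet> s < 1"
      using one_minus_norm_square_pos[OF assms(1)] by (simp add: power2_norm_eq_inner)
    then show ?thesis
      using assms(2) by simp
  qed
  finally show ?thesis
    by (simp add: Qinv_def inner_diff_right power2_eq_square inner_commute)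
qed

lemma quadratic_form_coercive:
  fixes W :: "real^'n^'n"
  assumes pd: "\<forall>x. x \<noteq> 0 \<longrightarrow> x \<bullet> (W *v x) > 0"
  obtains c where "c > 0" and "\<And>x. c * (norm x)^2 \<le> x \<bullet> (W *v x)"
proof -
  let ?q = "\<lambda>x. x \<bullet> (W *v x)"
  have hom: "?q (c *\<^sub>R x) = c^2 * ?q x" for c x
    by (simp add: matrix_vector_mult_scaleR power2_eq_square)
  have "(axis i 1 :: real^'n) \<in> sphere 0 1" for i
    by simp
  then have "sphere (0::real^'n) 1 \<noteq> {}"
    by blast
  moreover have "continuous_on (sphere 0 1) ?q"
    by (intro continuous_intros)
  ultimately obtain u where "u \<in> sphere 0 1" and u: "\<forall>y\<in>sphere 0 1. ?q u \<le> ?q y"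
    using continuous_attains_inf[OF compact_sphere] by blast
  then have "u \<noteq> 0"
    by auto
  then have "?q u > 0"
    using pd by blast
  moreover have "?q u * (norm x)^2 \<le> ?q x" for x
  proof (cases "x = 0")
    case False
    then have "inverse (norm x) *\<^sub>R x \<in> sphere 0 1"
      by simp
    then have "?q u \<le> ?q (inverse (norm x) *\<^sub>R x)"
      using u by blast
    then have "?q u \<le> inverse (norm x)^2 * ?q x"
      by (simp only: hom)
    then show ?thesis
      using False by (simp add: field_simps power_inverse)
  qed simp
  ultimately show thesis
    using that by blast
qed

lemma pos_def_2x2_det_pos:
  fixes W :: "real^2^2"
  assumes W: "transpose W = W" and pd: "\<forall>x. x \<noteq> 0 \<longrightarrow> x \<bullet> (W *v x) > 0"
  shows "det W > 0"
proof -
  have W12: "W$1$2 = W$2$1"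
    using arg_cong[OF W, of "\<lambda>M. M$1$2"] by (simp add: transpose_def)
  have q: "x \<bullet> (W *v x) = W$1$1 * x$1^2 + 2 * W$1$2 * x$1 * x$2 + W$2$2 * x$2^2" for x
    by (simp add: inner_2 matrix_vector_mult_def sum_2 W12 power2_eq_square algebra_simps)
  have "(axis 2 1 :: real^2) \<noteq> 0"
    by (simp add: axis_eq_0_iff)
  then have W22: "W$2$2 > 0"
    using pd q[of "axis 2 1"] by (auto simp: axis_def)
  let ?y = "vector [W$2$2, - W$1$2] :: real^2"
  have "?y \<noteq> 0"
    using W22 by (auto simp: vec_eq_iff forall_2)
  then have "?y \<bullet> (W *v ?y) > 0"
    using pd by blast
  then have "W$2$2 * det W > 0"
    unfolding q det_2 W12 by (simp add: power2_eq_square algebra_simps)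
  then show ?thesis
    using W22 by (simp add: zero_less_mult_iff)
qed

lemma coercive_continuous_attains_min:
  fixes f :: "'a::euclidean_space \<Rightarrow> real"
  assumes "continuous_on UNIV f" and "\<And>x. f x \<ge> A + B * (norm x)^2" and "B > 0"
  obtains x0 where "\<And>x. f x0 \<le> f x"
proof -
  let ?K = "{x. f x \<le> f 0}"
  have "?K \<subseteq> cball 0 (sqrt ((f 0 - A) / B))"
  proof
    fix x assume "x \<in> ?K"
    then have "(norm x)^2 \<le> (f 0 - A) / B"
      using assms(2)[of x] assms(3) by (simp add: field_simps)
    then show "x \<in> cball 0 (sqrt ((f 0 - A) / B))"
      using real_le_rsqrt by simp
  qed
  then have "compact ?K"
    using closed_Collect_le[OF assms(1) continuous_on_const]
    by (meson bounded_cball bounded_subset compact_eq_bounded_closed)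
  moreover have "0 \<in> ?K"
    by simp
  moreover have "continuous_on ?K f"
    using assms(1) by (rule continuous_on_subset) simp
  ultimately obtain x0 where x0: "x0 \<in> ?K" "\<forall>y\<in>?K. f x0 \<le> f y"
    using continuous_attains_inf by blast
  show thesis
  proof
    show "f x0 \<le> f x" for x
      using x0 by (cases "x \<in> ?K") auto
  qed
qed

lemma cross3_nonzero_if_independent:
  assumes ind: "\<forall>\<alpha> \<beta>::real. \<alpha> *\<^sub>R a + \<beta> *\<^sub>R b = 0 \<longrightarrow> \<alpha> = 0 \<and> \<beta> = 0"
  shows "cross3 a b \<noteq> 0"
proof
  assume "cross3 a b = 0"
  then have "cross3 a (cross3 a b) = 0"
    by simp
  then have "(a \<bullet> b) *\<^sub>R a + (- (a \<bullet> a)) *\<^sub>R b = 0"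
    by (simp add: Lagrange)
  then have "- (a \<bullet> a) = 0"
    by (rule ind[rule_format, THEN conjunct2])
  then have "1 *\<^sub>R a + 0 *\<^sub>R b = 0"
    by simp
  then show False
    using ind[rule_format, of 1 0] by simp
qed

lemma orthogonal_eq_scaleR_cross3:
  assumes "a \<bullet> u = 0" and "b \<bullet> u = 0" and "cross3 a b \<noteq> 0"
  shows "u = ((cross3 a b \<bullet> u) / (cross3 a b \<bullet> cross3 a b)) *\<^sub>R cross3 a b"
proof -
  let ?n = "cross3 a b"
  have "cross3 ?n u = 0"
    using assms(1,2) by (subst cross_skew) (simp add: Lagrange inner_commute)
  then have "(?n \<bullet> u) *\<^sub>R ?n = (?n \<bullet> ?n) *\<^sub>R u"
    using Lagrange[of ?n ?n u] by simp
  then have "u = (1 / (?n \<bullet> ?n)) *\<^sub>R ((?n \<bullet> u) *\<^sub>R ?n)"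
    using assms(3) by simp
  then show ?thesis
    by simp
qed

lemma inner_lperp: "d i \<bullet> lperp d = 0"
  unfolding lperp_def using exhaust_2[of i] by (auto simp: dot_cross_self)

definition unbiased_vec :: "real^3 \<Rightarrow> (2 \<Rightarrow> real^3) \<Rightarrow> real^2 \<Rightarrow> 2 \<Rightarrow> real^3" where
  "unbiased_vec s d \<xi> i = sld_dual s d i + \<xi>$i *\<^sub>R lperp d"

context
  fixes s :: "real^3" and d :: "2 \<Rightarrow> real^3"
  assumes norm_s: "norm s < 1"
    and independent: "\<forall>a b::real. a *\<^sub>R d 1 + b *\<^sub>R d 2 = 0 \<longrightarrow> a = 0 \<and> b = 0"
begin

lemma invertible_fisherG: "invertible (fisherG s d)"
  unfolding invertible_left_inverse matrix_left_invertible_ker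
proof (intro allI impI)
  fix x :: "real^2"
  assume "fisherG s d *v x = 0"
  define u where "u = x$1 *\<^sub>R d 1 + x$2 *\<^sub>R d 2"
  have "u \<bullet> Qop s u = x \<bullet> (fisherG s d *v x)"
    by (simp add: u_def inner_2 sum_2 matrix_vector_mult_def fisherG_def inner_Qop
        inner_add_left inner_add_right inner_commute algebra_simps add_divide_distrib)
  also have "\<dots> = 0"
    using \<open>fisherG s d *v x = 0\<close> by simp
  finally have "u \<bullet> u \<le> 0"
    using inner_Qop_ge[OF norm_s, of u] by simp
  then have "u = 0"
    using inner_ge_zero[of u] by simp
  then have "x$1 = 0 \<and> x$2 = 0"
    using independent[rule_format, of "x$1" "x$2"] unfolding u_def by simp
  then show "x = 0"
    by (simp add: vec_eq_iff forall_2)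
qed

lemma inner_sld_dual: "d i \<bullet> sld_dual s d j = (if i = j then 1 else 0)"
proof -
  have "fisherG s d ** matrix_inv (fisherG s d) = mat 1"
    using invertible_fisherG unfolding invertible_def matrix_inv_def by (rule someI2_ex) auto
  moreover have "d i \<bullet> sld_dual s d j = (fisherG s d ** matrix_inv (fisherG s d)) $ i $ j"
    by (simp add: sld_dual_def sld_def inner_sum_right fisherG_def matrix_matrix_mult_def
        mult.commute)
  ultimately show ?thesis
    by (simp add: mat_def)
qed

lemma Qinv_sld_dual: "Qinv s (sld_dual s d j) = (\<Sum>k\<in>UNIV. matrix_inv (fisherG s d) $ k $ j *\<^sub>R d k)"
  by (simp add: sld_dual_def sld_def sum_2 Qinv_add Qinv_scaleR Qinv_Qop[OF norm_s])

lemma sld_dual_Qinv_sld_dual: "sld_dual s d k \<bullet> Qinv s (sld_dual s d i) = matrix_inv (fisherG s d) $ k $ i"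
  unfolding Qinv_sld_dual using exhaust_2[of k]
  by (auto simp: sum_2 inner_add_right inner_commute[of "sld_dual s d k"] inner_sld_dual)

lemma sld_dual_Qinv_lperp: "sld_dual s d k \<bullet> Qinv s (lperp d) = 0"
  unfolding inner_Qinv_commute Qinv_sld_dual
  by (simp add: sum_2 inner_add_left inner_lperp)

lemma lperp_Qinv_sld_dual: "lperp d \<bullet> Qinv s (sld_dual s d k) = 0"
  using sld_dual_Qinv_lperp by (simp add: inner_Qinv_commute inner_commute)

lemma weighted_Qinv_unbiased_vec:
  "(\<Sum>i\<in>UNIV. \<Sum>k\<in>UNIV. W$i$k * (unbiased_vec s d \<xi> k \<bullet> Qinv s (unbiased_vec s d \<xi> i)))
   = trace (W ** matrix_inv (fisherG s d)) + (lperp d \<bullet> Qinv s (lperp d)) * (\<xi> \<bullet> (W *v \<xi>))"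
proof -
  have "unbiased_vec s d \<xi> k \<bullet> Qinv s (unbiased_vec s d \<xi> i)
     = matrix_inv (fisherG s d) $ k $ i + \<xi>$k * \<xi>$i * (lperp d \<bullet> Qinv s (lperp d))" for i k
    by (simp add: unbiased_vec_def Qinv_add Qinv_scaleR inner_add_left inner_add_right
        sld_dual_Qinv_sld_dual sld_dual_Qinv_lperp lperp_Qinv_sld_dual)
  then show ?thesis
    by (simp add: sum_2 trace_2x2 matrix_matrix_mult_def matrix_vector_mult_def inner_2
        algebra_simps)
qed

lemma triple_product_unbiased_vec:
  "s \<bullet> cross3 (unbiased_vec s d \<xi> 1) (unbiased_vec s d \<xi> 2)
   = - (sld_dual s d 1 \<bullet> Fop s (sld_dual s d 2) + (1 - (norm s)^2) * (gammav s d \<bullet> \<xi>))"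
proof -
  let ?l = "sld_dual s d" and ?n = "lperp d"
  have dl: "?l j \<bullet> d i = (if i = j then 1 else 0)" for i j
    using inner_sld_dual[of i j] by (simp add: inner_commute)
  have "cross3 (?l 1) ?n = - d 2"
    by (simp add: lperp_def Lagrange dl)
  moreover have "cross3 ?n (?l 2) = - d 1"
    by (subst cross_skew) (simp add: lperp_def Lagrange dl)
  ultimately have "s \<bullet> cross3 (unbiased_vec s d \<xi> 1) (unbiased_vec s d \<xi> 2)
     = s \<bullet> cross3 (?l 1) (?l 2) - \<xi>$1 * (s \<bullet> d 1) - \<xi>$2 * (s \<bullet> d 2)"
    by (simp add: unbiased_vec_def cross_add_left cross_add_right cross_mult_left
        cross_mult_right inner_add_right algebra_simps)
  also have "s \<bullet> cross3 (?l 1) (?l 2) = - (?l 1 \<bullet> Fop s (?l 2))"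
    using cross_triple[of "?l 1" "?l 2" s] cross_skew[of "?l 2" s]
    by (simp add: Fop_def inner_commute)
  also have "(1 - (norm s)^2) * (gammav s d \<bullet> \<xi>)
      = \<xi>$1 * ((1 - (norm s)^2) * (s \<bullet> Qop s (d 1)))
        + \<xi>$2 * ((1 - (norm s)^2) * (s \<bullet> Qop s (d 2)))"
    by (simp add: gammav_def sld_def inner_2 algebra_simps)
  then have "\<xi>$1 * (s \<bullet> d 1) + \<xi>$2 * (s \<bullet> d 2) = (1 - (norm s)^2) * (gammav s d \<bullet> \<xi>)"
    unfolding inner_Qop_scaled[OF norm_s] by simp
  ultimately show ?thesis
    by (simp add: algebra_simps)
qed

lemma holevo_feasible_iff_unbiased_vec:
  "holevo_feasible (bloch_rho s) (\<lambda>i. (1/2::real) *\<^sub>R bloch_matrix 0 (d i)) X \<longleftrightarrow>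
   (\<exists>\<xi>. X = (\<lambda>i. centred_bloch_matrix s (unbiased_vec s d \<xi> i)))"
  (is "holevo_feasible _ ?d\<rho> X \<longleftrightarrow> _")
proof
  assume "holevo_feasible (bloch_rho s) ?d\<rho> X"
  then have hermitian: "\<And>i. hermitian2 (X i)"
    and zero_mean: "\<And>i. trace (bloch_rho s ** X i) = 0"
    and unbiased: "\<And>i j. trace (?d\<rho> i ** X j) = (if i = j then 1 else 0)"
    unfolding holevo_feasible_def by auto
  have "\<forall>i. \<exists>v. X i = centred_bloch_matrix s v"
    using zero_mean_hermitian2_obtains_centred[OF hermitian zero_mean] by metis
  then obtain v where X: "X = (\<lambda>i. centred_bloch_matrix s (v i))"
    by metis
  have d_v: "d i \<bullet> v j = (if i = j then 1 else 0)" for i j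
    using unbiased[of i j]
    by (simp add: X centred_bloch_matrix_def trace_bloch_matrix_0_mult split: if_splits)
  define \<xi> where "\<xi> = (\<chi> j. (lperp d \<bullet> (v j - sld_dual s d j)) / (lperp d \<bullet> lperp d))"
  \<comment> \<open>\<open>v j - sld_dual s d j\<close> is orthogonal to both \<open>d i\<close>, hence parallel to \<open>lperp d\<close>.\<close>
  have "v j = unbiased_vec s d \<xi> j" for j
    using orthogonal_eq_scaleR_cross3[of "d 1" "v j - sld_dual s d j" "d 2"]
      cross3_nonzero_if_independent[OF independent]
    by (simp add: unbiased_vec_def \<xi>_def lperp_def inner_diff_right d_v inner_sld_dual
        algebra_simps)
  then show "\<exists>\<xi>. X = (\<lambda>i. centred_bloch_matrix s (unbiased_vec s d \<xi> i))"
    unfolding X by auto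
next
  assume "\<exists>\<xi>. X = (\<lambda>i. centred_bloch_matrix s (unbiased_vec s d \<xi> i))"
  then show "holevo_feasible (bloch_rho s) ?d\<rho> X"
    by (auto simp: holevo_feasible_def centred_bloch_matrix_def hermitian2_bloch_matrix
        trace_bloch_rho_mult trace_bloch_matrix_0_mult unbiased_vec_def inner_add_right
        inner_sld_dual inner_lperp)
qed

lemma holevo_obj_unbiased_vec:
  assumes "transpose W = W" and "det W \<ge> 0"
  shows "holevo_obj W (bloch_rho s) (\<lambda>i. centred_bloch_matrix s (unbiased_vec s d \<xi> i))
         = hfun s d W \<xi>"
  unfolding holevo_obj_centred[OF assms] weighted_Qinv_unbiased_vec triple_product_unbiased_vec
    hfun_def abs_minus_cancel ..

lemma hfun_attains_min:
  assumes "transpose W = W" and pd: "\<forall>x::real^2. x \<noteq> 0 \<longrightarrow> x \<bullet> (W *v x) > 0"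
  obtains \<xi>0 where "\<And>\<xi>. hfun s d W \<xi>0 \<le> hfun s d W \<xi>"
proof -
  obtain c where c: "c > 0" "\<And>x. c * (norm x)^2 \<le> x \<bullet> (W *v x)"
    using quadratic_form_coercive[OF pd] by blast
  let ?N = "lperp d \<bullet> Qinv s (lperp d)"
  have N: "?N > 0"
    using inner_Qinv_pos[OF norm_s cross3_nonzero_if_independent[OF independent]]
    by (simp add: lperp_def)
  have "hfun s d W \<xi> \<ge> trace (W ** matrix_inv (fisherG s d)) + (?N * c) * (norm \<xi>)^2" for \<xi>
  proof -
    have "(?N * c) * (norm \<xi>)^2 \<le> ?N * (\<xi> \<bullet> (W *v \<xi>))"
      unfolding mult.assoc using N c(2) by (intro mult_left_mono) auto
    moreover have "2 * sqrt (det W) * \<bar>r\<bar> \<ge> 0" for r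
      using pos_def_2x2_det_pos[OF assms] by simp
    ultimately show ?thesis
      unfolding hfun_def by (smt (verit))
  qed
  moreover have "continuous_on UNIV (hfun s d W)"
    unfolding hfun_def by (intro continuous_intros)
  ultimately show thesis
    using coercive_continuous_attains_min N c(1) that by (metis mult_pos_pos)
qed

end

theorem lemma2:
  fixes \<Theta> :: "(real^2) set" and s :: "real^2 \<Rightarrow> real^3"
    and \<theta> :: "real^2" and W :: "real^2^2"
  assumes "open \<Theta>" and "\<theta> \<in> \<Theta>"
    and "s differentiable_on \<Theta>"
    and "\<forall>t\<in>\<Theta>. norm (s t) < 1"
    and "\<forall>t\<in>\<Theta>. \<forall>a b::real.
           a *\<^sub>R pderiv2 (\<lambda>u. bloch_rho (s u)) t 1 + b *\<^sub>R pderiv2 (\<lambda>u. bloch_rho (s u)) t 2 = 0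
           \<longrightarrow> a = 0 \<and> b = 0"
    and "transpose W = W" and "\<forall>x::real^2. x \<noteq> 0 \<longrightarrow> x \<bullet> (W *v x) > 0"
  shows "\<exists>X0 \<xi>0.
           holevo_feasible (bloch_rho (s \<theta>)) (pderiv2 (\<lambda>u. bloch_rho (s u)) \<theta>) X0
         \<and> (\<forall>X. holevo_feasible (bloch_rho (s \<theta>)) (pderiv2 (\<lambda>u. bloch_rho (s u)) \<theta>) X
                \<longrightarrow> holevo_obj W (bloch_rho (s \<theta>)) X0 \<le> holevo_obj W (bloch_rho (s \<theta>)) X)
         \<and> (\<forall>\<xi>. hfun (s \<theta>) (pderiv2 s \<theta>) W \<xi>0 \<le> hfun (s \<theta>) (pderiv2 s \<theta>) W \<xi>)
         \<and> holevo_bound W (bloch_rho (s \<theta>)) (pderiv2 (\<lambda>u. bloch_rho (s u)) \<theta>)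
             = hfun (s \<theta>) (pderiv2 s \<theta>) W \<xi>0
         \<and> holevo_obj W (bloch_rho (s \<theta>)) X0 = hfun (s \<theta>) (pderiv2 s \<theta>) W \<xi>0"
proof -
  define d where "d = pderiv2 s \<theta>"
  have norm_s: "norm (s \<theta>) < 1"
    using assms(2,4) by blast
  have d\<rho>: "pderiv2 (\<lambda>u. bloch_rho (s u)) \<theta> = (\<lambda>i. (1/2::real) *\<^sub>R bloch_matrix 0 (d i))"
    using assms(1-3) pderiv2_bloch_rho differentiable_on_eq_differentiable_at
    unfolding d_def by blast
  have independent: "\<forall>a b::real. a *\<^sub>R d 1 + b *\<^sub>R d 2 = 0 \<longrightarrow> a = 0 \<and> b = 0"
  proof -
    have "\<forall>a b::real. a *\<^sub>R pderiv2 (\<lambda>u. bloch_rho (s u)) \<theta> 1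
                     + b *\<^sub>R pderiv2 (\<lambda>u. bloch_rho (s u)) \<theta> 2 = 0 \<longrightarrow> a = 0 \<and> b = 0"
      using assms(2,5) by blast
    then show ?thesis
      unfolding d\<rho> by (rule independent_if_half_bloch_matrix_0_independent)
  qed
  note feasible_iff = holevo_feasible_iff_unbiased_vec[OF norm_s independent]
  note obj = holevo_obj_unbiased_vec[OF norm_s independent assms(6)
      less_imp_le[OF pos_def_2x2_det_pos[OF assms(6,7)]]]
  obtain \<xi>0 where min: "\<And>\<xi>. hfun (s \<theta>) d W \<xi>0 \<le> hfun (s \<theta>) d W \<xi>"
    using hfun_attains_min[OF norm_s independent assms(6,7)] by blast
  have "{holevo_obj W (bloch_rho (s \<theta>)) X | X.
          holevo_feasible (bloch_rho (s \<theta>)) (pderiv2 (\<lambda>u. bloch_rho (s u)) \<theta>) X}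
        = range (hfun (s \<theta>) d W)"
    unfolding d\<rho> feasible_iff by (force simp: obj)
  then have "holevo_bound W (bloch_rho (s \<theta>)) (pderiv2 (\<lambda>u. bloch_rho (s u)) \<theta>) = hfun (s \<theta>) d W \<xi>0"
    unfolding holevo_bound_def by (auto intro!: cInf_eq_minimum min)
  then show ?thesis
    unfolding d_def[symmetric] d\<rho> feasible_iff
    by (intro exI[of _ "\<lambda>i. centred_bloch_matrix (s \<theta>) (unbiased_vec (s \<theta>) d \<xi>0 i)"] exI[of _ \<xi>0])
      (auto simp: obj min)
qed

end
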